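(* If $n,m>0$, then \[ \alpha_{n,m} = \frac{1}{4 \pi m} \left( 2 \sqrt{n} \arctan\left( \frac{m}{\sqrt{n}}\right) - m \log \left(\frac{4n}{n+m^2}\right) \right). \]
   Context: For $y>0$, $\alpha(y) := \frac{\sqrt{y}}{4 \pi} \int_0^{\infty} t^{-1/2} e^{- \pi y t} \log ( 1 + t)\, dt$, and for $m,n>0$, $\alpha_{n,m} := 4\pi (n+m^2) \int_0^{\infty}\alpha(4ny)e^{-4\pi (n+m^2)y}\,dy$. *)

theory Defs
  imports "HOL-Analysis.Analysis"
begin

definition alpha :: "real \<Rightarrow> real" where
  "alpha y = sqrt y / (4 * pi) *
     (LBINT t:{0<..}. t powr (-1/2) * exp (- pi * y * t) * ln (1 + t))"

definition alpha_nm :: "real \<Rightarrow> real \<Rightarrow> real" where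
  "alpha_nm n m = 4 * pi * (n + m^2) *
     (LBINT y:{0<..}. alpha (4 * n * y) * exp (- 4 * pi * (n + m^2) * y))"

end

theory Submission
  imports Defs "HOL-Real_Asymp.Real_Asymp"
begin

text \<open>
  Insert the defining integral of \<open>alpha (4 n y)\<close> and integrate over \<open>y\<close> first (Tonelli): the
  \<open>y\<close>-integral is a \<open>Gamma (3/2)\<close> integral, and with \<open>a = n + m\<^sup>2\<close> and
  \<open>P t = sqrt (n t) / sqrt (n t + a)\<close> what remains is
  \<open>alpha_nm n m = 1 / (4 pi) * \<integral>\<^sub>0\<^sup>\<infinity> P' t * ln (1 + t) dt\<close>.
  Integrating by parts leaves \<open>\<integral> P t / (1 + t) dt\<close>, which is elementary: because
  \<open>a - n = m\<^sup>2\<close>, \<open>P t / (1 + t)\<close> is the derivative of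
  \<open>2 ln (sqrt (n t) + sqrt (n t + a)) - 2 sqrt n / m * arctan (m / sqrt n * P t)\<close>.
\<close>

lemma has_real_derivative_sqrt_affine:
  fixes c d t :: real
  assumes "c * t + d > 0"
  shows "((\<lambda>t. sqrt (c * t + d)) has_real_derivative c / (2 * sqrt (c * t + d))) (at t)"
  using assms by (auto intro!: derivative_eq_intros simp: field_simps)

lemma Gamma_three_halves: "Gamma (3/2 :: real) = sqrt pi / 2"
proof -
  have "(1/2 :: real) \<notin> \<int>\<^sub>\<le>\<^sub>0"
    by (metis not_less nonpos_Ints_nonpos zero_less_divide_1_iff zero_less_numeral)
  then have "Gamma (1/2 + 1 :: real) = 1/2 * Gamma (1/2)"
    by (rule Gamma_plus1)
  then show ?thesis
    by (simp add: Gamma_one_half_real)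
qed

lemma nn_integral_ennreal_cmult:
  fixes f :: "'a \<Rightarrow> real"
  assumes "c \<ge> 0" "f \<in> borel_measurable M"
  shows "(\<integral>\<^sup>+x. ennreal (c * f x) \<partial>M) = ennreal c * (\<integral>\<^sup>+x. ennreal (f x) \<partial>M)"
  using assms by (simp add: ennreal_mult' nn_integral_cmult)

lemma nn_integral_sqrt_exp:
  fixes b :: real
  assumes "b > 0"
  shows "(\<integral>\<^sup>+y. ennreal (indicator {0<..} y * (sqrt y * exp (- b * y))) \<partial>lborel)
    = ennreal (sqrt pi / (2 * sqrt b ^ 3))"
proof -
  let ?f = "\<lambda>y. ennreal (indicator {0<..} y * (sqrt y * exp (- b * y)))"
  let ?Gamma_integrand = "\<lambda>x. indicator {0..} x * x powr (3/2 - 1) / exp x"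
  have "integral\<^sup>N lborel ?f = ennreal (1 / b) * (\<integral>\<^sup>+x. ?f (x / b) \<partial>lborel)"
    using nn_integral_real_affine[of ?f "1 / b" 0] assms by simp
  also have "(\<integral>\<^sup>+x. ?f (x / b) \<partial>lborel) = (\<integral>\<^sup>+x. ennreal (1 / sqrt b * ?Gamma_integrand x) \<partial>lborel)"
  proof (rule nn_integral_cong)
    fix x :: real
    show "?f (x / b) = ennreal (1 / sqrt b * ?Gamma_integrand x)"
      using assms by (cases "x > 0")
        (auto simp: real_sqrt_divide powr_half_sqrt exp_minus field_simps not_less)
  qed
  also have "\<dots> = ennreal (1 / sqrt b) * (\<integral>\<^sup>+x. ennreal (?Gamma_integrand x) \<partial>lborel)"
    by (rule nn_integral_ennreal_cmult) (use assms in simp, measurable)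
  also have "(\<integral>\<^sup>+x. ennreal (?Gamma_integrand x) \<partial>lborel) = ennreal (Gamma (3/2))"
    by (rule Gamma_conv_nn_integral_real[symmetric]) simp
  finally show ?thesis
    using assms by (simp add: Gamma_three_halves ennreal_mult[symmetric] field_simps power3_eq_cube)
qed

definition sqrt_ratio :: "real \<Rightarrow> real \<Rightarrow> real \<Rightarrow> real" where
  "sqrt_ratio n a t = sqrt (n * t) / sqrt (n * t + a)"

lemma has_real_derivative_sqrt_ratio:
  fixes n a t :: real
  assumes "n > 0" "a > 0" "t > 0"
  shows "(sqrt_ratio n a has_real_derivative n * a / (2 * sqrt (n * t) * sqrt (n * t + a) ^ 3)) (at t)"
proof -
  have r: "((\<lambda>t. sqrt (n * t)) has_real_derivative n / (2 * sqrt (n * t))) (at t)"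
    using has_real_derivative_sqrt_affine[of n t 0] assms by simp
  have s: "((\<lambda>t. sqrt (n * t + a)) has_real_derivative n / (2 * sqrt (n * t + a))) (at t)"
    using has_real_derivative_sqrt_affine[of n t a] assms by (simp add: add_pos_pos)
  have quotient_rule: "(n / (2 * r) * s - r * (n / (2 * s))) / (s * s) = n * a / (2 * r * s ^ 3)"
    if "r > 0" "s > 0" "s^2 = r^2 + a" for r s
  proof -
    have "(n / (2 * r) * s - r * (n / (2 * s))) / (s * s) = n * (s^2 - r^2) / (2 * r * s ^ 3)"
      using that by (simp add: field_simps power2_eq_square power3_eq_cube)
    with that show ?thesis by simp
  qed
  have "n * t + a > 0" using assms by (simp add: add_pos_pos)
  then have s_nonzero: "sqrt (n * t + a) \<noteq> 0" by simp
  show ?thesis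
    unfolding sqrt_ratio_def[abs_def]
    by (rule DERIV_cong[OF DERIV_divide[OF r s s_nonzero]], rule quotient_rule)
      (use assms \<open>n * t + a > 0\<close> in simp_all)
qed

lemma has_real_derivative_ln_sqrt_sum:
  fixes n a t :: real
  assumes "n > 0" "a > 0" "t > 0"
  shows "((\<lambda>t. ln (sqrt (n * t) + sqrt (n * t + a))) has_real_derivative
    n / (2 * sqrt (n * t) * sqrt (n * t + a))) (at t)"
proof -
  have r: "((\<lambda>t. sqrt (n * t)) has_real_derivative n / (2 * sqrt (n * t))) (at t)"
    using has_real_derivative_sqrt_affine[of n t 0] assms by simp
  have s: "((\<lambda>t. sqrt (n * t + a)) has_real_derivative n / (2 * sqrt (n * t + a))) (at t)"
    using has_real_derivative_sqrt_affine[of n t a] assms by (simp add: add_pos_pos)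
  have chain_rule: "1 / (r + s) * (n / (2 * r) + n / (2 * s)) = n / (2 * r * s)"
    if "r > 0" "s > 0" for r s
  proof -
    have "n / (2 * r) + n / (2 * s) = n * (r + s) / (2 * r * s)"
      using that by (simp add: field_simps)
    with that show ?thesis by (simp add: add_pos_pos)
  qed
  have "sqrt (n * t) + sqrt (n * t + a) > 0" using assms by (simp add: add_pos_pos)
  from DERIV_chain2[OF DERIV_ln_divide[OF this] DERIV_add[OF r s]] show ?thesis
    using chain_rule[of "sqrt (n * t)" "sqrt (n * t + a)"] assms by (simp add: add_pos_pos)
qed

lemma has_real_derivative_arctan_sqrt_ratio:
  fixes n m a t :: real
  assumes "n > 0" "m > 0" "t > 0" "a = n + m^2"
  shows "((\<lambda>t. 2 * sqrt n / m * arctan (m / sqrt n * sqrt_ratio n a t)) has_real_derivative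
    n / (sqrt (n * t) * sqrt (n * t + a) * (1 + t))) (at t)"
proof -
  have "a > 0" using assms by (simp add: add_pos_nonneg)
  have "n * t + a > 0" using assms \<open>a > 0\<close> by (simp add: add_pos_pos)
  have P: "((\<lambda>t. m / sqrt n * sqrt_ratio n a t) has_real_derivative
      m / sqrt n * (n * a / (2 * sqrt (n * t) * sqrt (n * t + a) ^ 3))) (at t)"
    using has_real_derivative_sqrt_ratio[OF assms(1) \<open>a > 0\<close> assms(3)] by (rule DERIV_cmult)
  have chain_rule: "2 * w / m * (inverse (1 + (m / w * (r / s))^2) * (m / w * (n * a / (2 * r * s ^ 3))))
      = n / (r * s * (1 + t))"
    if "r > 0" "s > 0" "w > 0" "r^2 = n * t" "s^2 = n * t + a" "w^2 = n" for r s w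
  proof -
    have "(m / w * (r / s))^2 = m^2 * t / s^2"
      using that assms(1) by (simp add: power_mult_distrib power_divide)
    then have "1 + (m / w * (r / s))^2 = (s^2 + m^2 * t) / s^2"
      using that \<open>n * t + a > 0\<close> by (simp add: field_simps)
    also have "s^2 + m^2 * t = a * (1 + t)"
      using that assms(4) by (simp add: algebra_simps)
    finally have denominator: "1 + (m / w * (r / s))^2 = a * (1 + t) / s^2" .
    have cancel: "2 * w / m * (inverse X * (m / w * Q)) = 2 * Q / X" for X Q
      using that assms by (simp add: field_simps)
    have "2 * (n * a / (2 * r * s ^ 3)) / (a * (1 + t) / s^2) = n / (r * s * (1 + t))"
      using that(1,2) assms(3) \<open>a > 0\<close> by (simp add: divide_simps power2_eq_square power3_eq_cube)
    then show ?thesis unfolding cancel denominator .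
  qed
  from DERIV_cmult[OF DERIV_chain2[OF DERIV_arctan P], of "2 * sqrt n / m"] show ?thesis
    using chain_rule[of "sqrt (n * t)" "sqrt (n * t + a)" "sqrt n"] assms \<open>a > 0\<close>
    by (simp add: sqrt_ratio_def add_pos_pos)
qed

definition log_weight :: "real \<Rightarrow> real \<Rightarrow> real \<Rightarrow> real" where
  "log_weight n a t = n * a / (2 * sqrt (n * t) * sqrt (n * t + a) ^ 3) * ln (1 + t)"

definition log_weight_primitive :: "real \<Rightarrow> real \<Rightarrow> real \<Rightarrow> real \<Rightarrow> real" where
  "log_weight_primitive n m a t =
     sqrt_ratio n a t * ln (1 + t) - 2 * ln (sqrt (n * t) + sqrt (n * t + a))
     + 2 * sqrt n / m * arctan (m / sqrt n * sqrt_ratio n a t)"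

lemma has_real_derivative_log_weight_primitive:
  fixes n m a t :: real
  assumes "n > 0" "m > 0" "t > 0" "a = n + m^2"
  shows "(log_weight_primitive n m a has_real_derivative log_weight n a t) (at t)"
proof -
  have "a > 0" using assms by (simp add: add_pos_nonneg)
  have ln: "((\<lambda>t. ln (1 + t)) has_real_derivative 1 / (1 + t)) (at t)"
    using assms by (auto intro!: derivative_eq_intros)
  have cancellation: "X + 1 / (1 + t) * (r / s) - 2 * (n / (2 * r * s)) + n / (r * s * (1 + t)) = X"
    if "r > 0" "s > 0" "r^2 = n * t" for X r s
  proof -
    have "1 / (1 + t) * (r / s) - 2 * (n / (2 * r * s)) + n / (r * s * (1 + t))
        = (r^2 - n * t) / (r * s * (1 + t))"
      using that assms(3) by (simp add: divide_simps power2_eq_square) (simp add: algebra_simps)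
    with that show ?thesis by simp
  qed
  note D = DERIV_add[OF DERIV_diff[OF DERIV_mult[OF
        has_real_derivative_sqrt_ratio[OF assms(1) \<open>a > 0\<close> assms(3)] ln]
        DERIV_cmult[OF has_real_derivative_ln_sqrt_sum[OF assms(1) \<open>a > 0\<close> assms(3)], of 2]]
        has_real_derivative_arctan_sqrt_ratio[OF assms]]
  show ?thesis
    unfolding log_weight_primitive_def[abs_def]
    by (rule DERIV_cong[OF D]) (unfold sqrt_ratio_def log_weight_def, rule cancellation,
        use assms \<open>a > 0\<close> in \<open>simp_all add: add_pos_pos\<close>)
qed

lemma log_weight_primitive_tendsto_0:
  fixes n m a :: real
  assumes "n > 0" "a > 0"
  shows "(log_weight_primitive n m a \<longlongrightarrow> - ln a) (at_right 0)"
proof -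
  have "isCont (log_weight_primitive n m a) 0"
    unfolding log_weight_primitive_def sqrt_ratio_def using assms by (intro continuous_intros) auto
  moreover have "log_weight_primitive n m a 0 = - ln a"
    using assms by (simp add: log_weight_primitive_def sqrt_ratio_def ln_sqrt)
  ultimately show ?thesis
    by (metis isCont_def filterlim_at_split)
qed

lemma log_weight_primitive_tendsto_top:
  fixes n m a :: real
  assumes "n > 0" "a > 0"
  shows "(log_weight_primitive n m a \<longlongrightarrow> 2 * sqrt n / m * arctan (m / sqrt n) - ln (4 * n)) at_top"
proof -
  have ratio: "(sqrt_ratio n a \<longlongrightarrow> 1) at_top"
    unfolding sqrt_ratio_def[abs_def] using assms by real_asymp
  have "((\<lambda>t. (sqrt_ratio n a t - 1) * ln (1 + t)) \<longlongrightarrow> 0) at_top"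
    unfolding sqrt_ratio_def using assms by real_asymp
  moreover have "((\<lambda>t. (1 + t) / (sqrt (n * t) + sqrt (n * t + a))^2) \<longlongrightarrow> 1 / (4 * n)) at_top"
  proof -
    have "((\<lambda>t. (1 + t) / (sqrt (n * t) + sqrt (n * t + a))^2) \<longlongrightarrow> inverse ((n powr (1/2))^2) / 4) at_top"
      using assms by real_asymp
    then show ?thesis using assms by (simp add: powr_half_sqrt inverse_eq_divide mult.commute)
  qed
  from tendsto_ln[OF this] have
    "((\<lambda>t. ln ((1 + t) / (sqrt (n * t) + sqrt (n * t + a))^2)) \<longlongrightarrow> - ln (4 * n)) at_top"
    using assms by (simp add: ln_div)
  ultimately have "((\<lambda>t. (sqrt_ratio n a t - 1) * ln (1 + t) + ln ((1 + t) / (sqrt (n * t) + sqrt (n * t + a))^2)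
      + 2 * sqrt n / m * arctan (m / sqrt n * sqrt_ratio n a t))
      \<longlongrightarrow> 0 + - ln (4 * n) + 2 * sqrt n / m * arctan (m / sqrt n * 1)) at_top"
    by (intro tendsto_intros ratio)
  moreover have "\<forall>\<^sub>F t in at_top. (sqrt_ratio n a t - 1) * ln (1 + t)
      + ln ((1 + t) / (sqrt (n * t) + sqrt (n * t + a))^2)
      + 2 * sqrt n / m * arctan (m / sqrt n * sqrt_ratio n a t) = log_weight_primitive n m a t"
    using eventually_gt_at_top[of 0]
  proof eventually_elim
    case (elim t)
    then have "sqrt (n * t) + sqrt (n * t + a) > 0" using assms by (simp add: add_pos_pos)
    with elim show ?case
      by (simp add: log_weight_primitive_def ln_div ln_realpow algebra_simps)
  qed
  ultimately show ?thesis
    by (simp add: tendsto_cong)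
qed

lemma set_integral_log_weight:
  fixes n m a :: real
  assumes "n > 0" "m > 0" "a = n + m^2"
  shows "(LBINT t:{0<..}. log_weight n a t) = 2 * sqrt n / m * arctan (m / sqrt n) - ln (4 * n) + ln a"
proof -
  have "a > 0" using assms by (simp add: add_pos_nonneg)
  have derivative: "(log_weight_primitive n m a has_real_derivative log_weight n a t) (at t)"
    and continuous: "isCont (log_weight n a) t"
    if "0 < ereal t" "ereal t < \<infinity>" for t
  proof -
    from that have "t > 0" by (simp add: zero_ereal_def)
    then show "(log_weight_primitive n m a has_real_derivative log_weight n a t) (at t)"
      using has_real_derivative_log_weight_primitive assms by blast
    have "n * t + a > 0" using \<open>t > 0\<close> assms(1) \<open>a > 0\<close> by (simp add: add_pos_pos)
    then show "isCont (log_weight n a) t"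
      unfolding log_weight_def using \<open>t > 0\<close> assms(1) by (intro continuous_intros) auto
  qed
  have "AE t in lborel. 0 < ereal t \<longrightarrow> ereal t < \<infinity> \<longrightarrow> 0 \<le> log_weight n a t"
    using assms(1) \<open>a > 0\<close> by (simp add: zero_ereal_def log_weight_def)
  moreover have "((log_weight_primitive n m a \<circ> real_of_ereal) \<longlongrightarrow> - ln a) (at_right 0)"
    unfolding zero_ereal_def ereal_tendsto_simps
    using log_weight_primitive_tendsto_0 assms(1) \<open>a > 0\<close> .
  moreover have "((log_weight_primitive n m a \<circ> real_of_ereal) \<longlongrightarrow>
      2 * sqrt n / m * arctan (m / sqrt n) - ln (4 * n)) (at_left \<infinity>)"
    unfolding ereal_tendsto_simps
    using log_weight_primitive_tendsto_top assms(1) \<open>a > 0\<close> .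
  ultimately have "(LBINT t=0..\<infinity>. log_weight n a t) =
      (2 * sqrt n / m * arctan (m / sqrt n) - ln (4 * n)) - (- ln a)"
    using interval_integral_FTC_nonneg[of 0 \<infinity>, OF _ derivative continuous] by auto
  moreover have "einterval 0 \<infinity> = {0<..}"
    by (auto simp: einterval_def zero_ereal_def)
  ultimately show ?thesis
    by (simp add: interval_lebesgue_integral_def)
qed

lemma alpha_measurable [measurable]: "alpha \<in> borel_measurable borel"
  unfolding alpha_def set_lebesgue_integral_def by measurable

lemma alpha_nonneg: "y \<ge> 0 \<Longrightarrow> alpha y \<ge> 0"
  unfolding alpha_def set_lebesgue_integral_def
  by (intro mult_nonneg_nonneg integral_nonneg) (auto simp: indicator_def)

lemma nn_integral_alpha_integrand_finite:
  fixes y :: real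
  assumes "y > 0"
  shows "(\<integral>\<^sup>+t. ennreal (indicator {0<..} t * (t powr (-1/2) * exp (- pi * y * t) * ln (1 + t))) \<partial>lborel) < \<infinity>"
proof -
  have "(\<integral>\<^sup>+t. ennreal (indicator {0<..} t * (t powr (-1/2) * exp (- pi * y * t) * ln (1 + t))) \<partial>lborel)
      \<le> (\<integral>\<^sup>+t. ennreal (indicator {0<..} t * (sqrt t * exp (- (pi * y) * t))) \<partial>lborel)"
  proof (intro nn_integral_mono ennreal_leI)
    fix t :: real
    show "indicator {0<..} t * (t powr (-1/2) * exp (- pi * y * t) * ln (1 + t))
        \<le> indicator {0<..} t * (sqrt t * exp (- (pi * y) * t))"
    proof (cases "t > 0")
      case True
      have "t powr (-1/2) * ln (1 + t) \<le> t powr (-1/2) * t"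
        using True by (intro mult_left_mono ln_add_one_self_le_self) auto
      also have "\<dots> = sqrt t"
        using True by (simp add: powr_minus_divide powr_half_sqrt real_div_sqrt)
      finally show ?thesis
        using True by (simp add: mult.commute mult.left_commute mult_right_mono)
    qed simp
  qed
  also have "\<dots> = ennreal (sqrt pi / (2 * sqrt (pi * y) ^ 3))"
    using assms by (intro nn_integral_sqrt_exp) simp
  finally show ?thesis
    by (simp add: order_le_less_trans)
qed

lemma ennreal_alpha:
  fixes y :: real
  assumes "y > 0"
  shows "ennreal (alpha y) = (\<integral>\<^sup>+t. ennreal (sqrt y / (4 * pi) *
    (indicator {0<..} t * (t powr (-1/2) * exp (- pi * y * t) * ln (1 + t)))) \<partial>lborel)"
proof -
  let ?N = "\<integral>\<^sup>+t. ennreal (indicator {0<..} t * (t powr (-1/2) * exp (- pi * y * t) * ln (1 + t))) \<partial>lborel"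
  have "alpha y = sqrt y / (4 * pi) * enn2real ?N"
    unfolding alpha_def set_lebesgue_integral_def
    by (subst integral_eq_nn_integral) (auto simp: indicator_def)
  moreover have "sqrt y / (4 * pi) \<ge> 0" using assms by simp
  ultimately have "ennreal (alpha y) = ennreal (sqrt y / (4 * pi)) * ennreal (enn2real ?N)"
    by (simp only: ennreal_mult')
  also have "\<dots> = ennreal (sqrt y / (4 * pi)) * ?N"
    using nn_integral_alpha_integrand_finite[OF assms] by simp
  also have "\<dots> = (\<integral>\<^sup>+t. ennreal (sqrt y / (4 * pi) *
      (indicator {0<..} t * (t powr (-1/2) * exp (- pi * y * t) * ln (1 + t)))) \<partial>lborel)"
    by (rule nn_integral_ennreal_cmult[symmetric]) (use assms in simp, measurable)
  finally show ?thesis .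
qed

lemma ennreal_alpha_mult_exp:
  fixes b c y :: real
  assumes "c > 0" "y > 0"
  shows "ennreal (alpha (c * y) * exp (- b * y)) = (\<integral>\<^sup>+t. ennreal
    (indicator {0<..} t * (sqrt c / (4 * pi) * t powr (-1/2) * ln (1 + t)) * (sqrt y * exp (- (b + pi * c * t) * y))) \<partial>lborel)"
proof -
  have "ennreal (alpha (c * y) * exp (- b * y)) = ennreal (exp (- b * y)) * ennreal (alpha (c * y))"
    using assms by (simp add: ennreal_mult'' mult.commute)
  also have "\<dots> = ennreal (exp (- b * y)) * (\<integral>\<^sup>+t. ennreal (sqrt (c * y) / (4 * pi) *
      (indicator {0<..} t * (t powr (-1/2) * exp (- pi * (c * y) * t) * ln (1 + t)))) \<partial>lborel)"
    using assms by (simp add: ennreal_alpha)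
  also have "\<dots> = (\<integral>\<^sup>+t. ennreal (exp (- b * y) * (sqrt (c * y) / (4 * pi) *
      (indicator {0<..} t * (t powr (-1/2) * exp (- pi * (c * y) * t) * ln (1 + t))))) \<partial>lborel)"
    by (rule nn_integral_ennreal_cmult[symmetric]) (simp, measurable)
  also have "\<dots> = (\<integral>\<^sup>+t. ennreal (indicator {0<..} t * (sqrt c / (4 * pi) * t powr (-1/2) * ln (1 + t))
      * (sqrt y * exp (- (b + pi * c * t) * y))) \<partial>lborel)"
  proof (rule nn_integral_cong)
    fix t :: real
    have exp_split: "exp (- (b + pi * c * t) * y) = exp (- b * y) * exp (- pi * (c * y) * t)"
      by (simp add: exp_add[symmetric] algebra_simps)
    show "ennreal (exp (- b * y) * (sqrt (c * y) / (4 * pi) *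
        (indicator {0<..} t * (t powr (-1/2) * exp (- pi * (c * y) * t) * ln (1 + t)))))
      = ennreal (indicator {0<..} t * (sqrt c / (4 * pi) * t powr (-1/2) * ln (1 + t))
        * (sqrt y * exp (- (b + pi * c * t) * y)))"
      using assms unfolding exp_split by (simp add: real_sqrt_mult mult_ac)
  qed
  finally show ?thesis .
qed

lemma nn_integral_alpha_laplace:
  fixes b c :: real
  assumes "b > 0" "c > 0"
  shows "(\<integral>\<^sup>+y. ennreal (indicator {0<..} y * (alpha (c * y) * exp (- b * y))) \<partial>lborel)
    = (\<integral>\<^sup>+t. ennreal (indicator {0<..} t *
        (sqrt c * ln (1 + t) / (8 * sqrt pi * sqrt t * sqrt (b + pi * c * t) ^ 3))) \<partial>lborel)"
proof -
  define k where "k t = indicator {0<..} t * (sqrt c / (4 * pi) * t powr (-1/2) * ln (1 + t))" for t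
  define G where "G y t = k t * (indicator {0<..} y * (sqrt y * exp (- (b + pi * c * t) * y)))" for y t
  have k_nonneg: "k t \<ge> 0" for t
    using assms by (simp add: k_def indicator_def)
  have G_measurable: "(\<lambda>(t, y). ennreal (G y t)) \<in> borel_measurable (lborel \<Otimes>\<^sub>M lborel)"
    unfolding G_def k_def by measurable
  have integrate_t: "ennreal (indicator {0<..} y * (alpha (c * y) * exp (- b * y)))
      = (\<integral>\<^sup>+t. ennreal (G y t) \<partial>lborel)" for y
    using ennreal_alpha_mult_exp[OF assms(2), of y b]
    by (cases "y > 0") (simp_all add: G_def k_def)
  have integrate_y: "(\<integral>\<^sup>+y. ennreal (G y t) \<partial>lborel) = ennreal (indicator {0<..} t *
      (sqrt c * ln (1 + t) / (8 * sqrt pi * sqrt t * sqrt (b + pi * c * t) ^ 3)))" for t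
  proof (cases "t > 0")
    case True
    have "b + pi * c * t > 0" using True assms by (simp add: add_pos_pos)
    have "(\<integral>\<^sup>+y. ennreal (G y t) \<partial>lborel)
        = ennreal (k t) * ennreal (sqrt pi / (2 * sqrt (b + pi * c * t) ^ 3))"
      unfolding G_def using k_nonneg nn_integral_sqrt_exp[OF \<open>b + pi * c * t > 0\<close>]
      by (subst nn_integral_ennreal_cmult) (simp_all, measurable)
    also have "\<dots> = ennreal (k t * (sqrt pi / (2 * sqrt (b + pi * c * t) ^ 3)))"
      by (rule ennreal_mult'[symmetric, OF k_nonneg])
    also have "k t * (sqrt pi / (2 * sqrt (b + pi * c * t) ^ 3))
        = sqrt c * ln (1 + t) / (8 * sqrt pi * sqrt t * sqrt (b + pi * c * t) ^ 3)"
    proof -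
      have "pi = sqrt pi * sqrt pi" by simp
      then show ?thesis
        using True \<open>b + pi * c * t > 0\<close>
        by (simp add: k_def powr_minus_divide powr_half_sqrt field_simps)
    qed
    finally show ?thesis using True by simp
  qed (simp add: G_def k_def)
  have "(\<integral>\<^sup>+y. ennreal (indicator {0<..} y * (alpha (c * y) * exp (- b * y))) \<partial>lborel)
      = (\<integral>\<^sup>+y. \<integral>\<^sup>+t. ennreal (G y t) \<partial>lborel \<partial>lborel)"
    by (simp only: integrate_t)
  also have "\<dots> = (\<integral>\<^sup>+t. \<integral>\<^sup>+y. ennreal (G y t) \<partial>lborel \<partial>lborel)"
    using lborel_pair.Fubini'[OF G_measurable] by simp
  finally show ?thesis
    by (simp add: integrate_y)
qed

lemma set_integral_alpha_laplace:
  fixes b c :: real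
  assumes "b > 0" "c > 0"
  shows "(LBINT y:{0<..}. alpha (c * y) * exp (- b * y))
    = (LBINT t:{0<..}. sqrt c * ln (1 + t) / (8 * sqrt pi * sqrt t * sqrt (b + pi * c * t) ^ 3))"
proof -
  have "(LBINT y:{0<..}. alpha (c * y) * exp (- b * y))
      = enn2real (\<integral>\<^sup>+y. ennreal (indicator {0<..} y * (alpha (c * y) * exp (- b * y))) \<partial>lborel)"
    unfolding set_lebesgue_integral_def using assms
    by (subst integral_eq_nn_integral) (auto simp: alpha_nonneg indicator_def)
  moreover have "(LBINT t:{0<..}. sqrt c * ln (1 + t) / (8 * sqrt pi * sqrt t * sqrt (b + pi * c * t) ^ 3))
      = enn2real (\<integral>\<^sup>+t. ennreal (indicator {0<..} t *
          (sqrt c * ln (1 + t) / (8 * sqrt pi * sqrt t * sqrt (b + pi * c * t) ^ 3))) \<partial>lborel)"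
    unfolding set_lebesgue_integral_def using assms
    by (subst integral_eq_nn_integral) (auto simp: indicator_def add_pos_pos)
  ultimately show ?thesis
    by (simp only: nn_integral_alpha_laplace[OF assms])
qed

lemma laplace_kernel_eq_log_weight:
  fixes n a t :: real
  assumes "n > 0" "a > 0" "t > 0"
  shows "sqrt (4 * n) * ln (1 + t) / (8 * sqrt pi * sqrt t * sqrt (4 * pi * a + pi * (4 * n) * t) ^ 3)
    = log_weight n a t / (16 * pi^2 * a)"
proof -
  have scaling: "2 * w * L / (8 * p * r * (2 * p * s) ^ 3)
      = w^2 * a / (2 * (w * r) * s ^ 3) * L / (16 * (p^2)^2 * a)"
    if "w > 0" "p > 0" "r > 0" "s > 0" for w p r s L
    using that assms(2) by (simp add: field_simps power2_eq_square power3_eq_cube)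
  have "4 * pi * a + pi * (4 * n) * t = 2^2 * pi * (n * t + a)"
    by (simp add: algebra_simps)
  then have "sqrt (4 * pi * a + pi * (4 * n) * t) = 2 * sqrt pi * sqrt (n * t + a)"
    by (simp add: real_sqrt_mult)
  moreover have "sqrt (4 * n) = 2 * sqrt n" "sqrt (n * t) = sqrt n * sqrt t"
    by (simp_all add: real_sqrt_mult)
  ultimately show ?thesis
    using scaling[of "sqrt n" "sqrt pi" "sqrt t" "sqrt (n * t + a)" "ln (1 + t)"] assms
    by (simp add: log_weight_def add_pos_pos)
qed

theorem lemma4p2:
  fixes n m :: real
  assumes "n > 0" and "m > 0"
  shows "alpha_nm n m =
    1 / (4 * pi * m) * (2 * sqrt n * arctan (m / sqrt n) - m * ln (4 * n / (n + m^2)))"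
proof -
  define a where "a = n + m^2"
  have "a > 0" using assms by (simp add: a_def add_pos_nonneg)
  have "(LBINT y:{0<..}. alpha (4 * n * y) * exp (- 4 * pi * (n + m^2) * y))
      = (LBINT y:{0<..}. alpha ((4 * n) * y) * exp (- (4 * pi * a) * y))"
    by (simp add: a_def)
  also have "\<dots> = (LBINT t:{0<..}. sqrt (4 * n) * ln (1 + t) /
      (8 * sqrt pi * sqrt t * sqrt (4 * pi * a + pi * (4 * n) * t) ^ 3))"
    using assms \<open>a > 0\<close> by (intro set_integral_alpha_laplace) simp_all
  also have "\<dots> = (LBINT t:{0<..}. log_weight n a t / (16 * pi^2 * a))"
    using assms \<open>a > 0\<close> by (intro set_lebesgue_integral_cong) (simp_all add: laplace_kernel_eq_log_weight)
  also have "\<dots> = (2 * sqrt n / m * arctan (m / sqrt n) - ln (4 * n) + ln a) / (16 * pi^2 * a)"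
    using set_integral_log_weight[OF assms a_def] by simp
  finally show ?thesis
    unfolding alpha_nm_def a_def[symmetric] using assms \<open>a > 0\<close>
    by (simp add: ln_div field_simps power2_eq_square)
qed

end
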